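(* There is an absolute constant $c>0$ such that for every sufficiently small $\varepsilon>0$ the following holds in the modified instance described in the context: there exists a clustering $\mathcal C^*_1$ of $V$ with cost at most $(1+c\varepsilon)\,\mathrm{opt}$ that does not split any atom of $\mathcal K$ and such that for every $u\in V$ and every $C\in\mathcal C^*_1$ with $K_u\subsetneq C$, we have $w(u,C)>\frac{|C|}{2}+\varepsilon\, w_u$.
   Context: A Correlation Clustering instance consists of a finite vertex set $V$ and a partition $E^+\uplus E^-=\binom V2$ of unordered pairs of distinct vertices into $+$edges and $-$edges; the cost of a clustering (partition) is the number of $+$edges between different parts plus the number of $-$edges inside parts. Every vertex has a $+$ self-loop by convention, so the set $N^+_u$ of $+$neighbours contains $u$. Let $\mathcal C$ be a clustering with cost at most $3$ times optimum. The atoms: with $\beta=0.1$, for every non-singleton $C\in\mathcal C$ mark every $u\in C$ with $|N^+_u\triangle C|>\frac\beta2|C|$ ($\triangle$ = symmetric difference), and if at least $\frac{\beta|C|}3$ vertices of $C$ are marked, mark all of $C$; $\mathcal K$ is obtained from $\mathcal C$ by making every marked vertex a singleton. Modified instance: every pair of distinct vertices lying in a common atom is relabelled as a $+$edge; below, costs and $\mathrm{opt}$ (the minimum cost) refer to this modified instance. For $u\in V$, $K_u$ is the atom containing $u$ and $k_u=|K_u|$. For $u,v\in V$ (possibly equal), $w_{uv}=\frac1{k_uk_v}\sum_{u'\in K_u,v'\in K_v}\mathbf 1[u'v'\text{ is a }+\text{edge or }u'=v']$; for $V'\subseteq V$, $w(u,V')=\sum_{v\in V'}w_{uv}$, and $w_u=w(u,V)$.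 *)

theory Defs
  imports Complex_Main "HOL-Library.Disjoint_Sets"
begin

text \<open>An instance: finite vertex set V and a symmetric relation E giving the +edges
  (pairs of distinct vertices not related by E are -edges).\<close>

definition same_cluster :: "'a set set \<Rightarrow> 'a \<Rightarrow> 'a \<Rightarrow> bool" where
  "same_cluster P u v \<longleftrightarrow> (\<exists>C\<in>P. u \<in> C \<and> v \<in> C)"

definition cc_cost :: "'a set \<Rightarrow> ('a \<Rightarrow> 'a \<Rightarrow> bool) \<Rightarrow> 'a set set \<Rightarrow> nat" where
  "cc_cost V E P = card {{u, v} | u v. u \<in> V \<and> v \<in> V \<and> u \<noteq> v \<and>
      ((E u v \<and> \<not> same_cluster P u v) \<or> (\<not> E u v \<and> same_cluster P u v))}"

definition cc_opt :: "'a set \<Rightarrow> ('a \<Rightarrow> 'a \<Rightarrow> bool) \<Rightarrow> nat" where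
  "cc_opt V E = Min {cc_cost V E P | P. partition_on V P}"

text \<open>+neighbourhood, including the vertex itself (self-loop convention).\<close>
definition plus_nbhd :: "'a set \<Rightarrow> ('a \<Rightarrow> 'a \<Rightarrow> bool) \<Rightarrow> 'a \<Rightarrow> 'a set" where
  "plus_nbhd V E u = {v \<in> V. v = u \<or> E u v}"

definition beta :: real where "beta = 1/10"

definition premarked :: "'a set \<Rightarrow> ('a \<Rightarrow> 'a \<Rightarrow> bool) \<Rightarrow> 'a set set \<Rightarrow> 'a set \<Rightarrow> 'a set" where
  "premarked V E Cl C = {u \<in> C. real (card (plus_nbhd V E u - C \<union> (C - plus_nbhd V E u)))
                                   > beta / 2 * real (card C)}"

definition marked :: "'a set \<Rightarrow> ('a \<Rightarrow> 'a \<Rightarrow> bool) \<Rightarrow> 'a set set \<Rightarrow> 'a set" where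
  "marked V E Cl = (\<Union>C \<in> {C \<in> Cl. card C \<ge> 2}.
      (if real (card (premarked V E Cl C)) \<ge> beta * real (card C) / 3 then C
       else premarked V E Cl C))"

definition atoms :: "'a set \<Rightarrow> ('a \<Rightarrow> 'a \<Rightarrow> bool) \<Rightarrow> 'a set set \<Rightarrow> 'a set set" where
  "atoms V E Cl = {C - marked V E Cl | C. C \<in> Cl \<and> C - marked V E Cl \<noteq> {}}
                  \<union> {{u} | u. u \<in> marked V E Cl}"

definition mod_E :: "'a set \<Rightarrow> ('a \<Rightarrow> 'a \<Rightarrow> bool) \<Rightarrow> 'a set set \<Rightarrow> 'a \<Rightarrow> 'a \<Rightarrow> bool" where
  "mod_E V E Cl u v \<longleftrightarrow> E u v \<or> (\<exists>K \<in> atoms V E Cl. u \<in> K \<and> v \<in> K)"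

definition atom_of :: "'a set \<Rightarrow> ('a \<Rightarrow> 'a \<Rightarrow> bool) \<Rightarrow> 'a set set \<Rightarrow> 'a \<Rightarrow> 'a set" where
  "atom_of V E Cl u = (THE K. K \<in> atoms V E Cl \<and> u \<in> K)"

definition wt :: "'a set \<Rightarrow> ('a \<Rightarrow> 'a \<Rightarrow> bool) \<Rightarrow> 'a set set \<Rightarrow> 'a \<Rightarrow> 'a \<Rightarrow> real" where
  "wt V E Cl u v = (let Ku = atom_of V E Cl u; Kv = atom_of V E Cl v in
     real (card {(u', v') \<in> Ku \<times> Kv. mod_E V E Cl u' v' \<or> u' = v'})
       / (real (card Ku) * real (card Kv)))"

definition wset :: "'a set \<Rightarrow> ('a \<Rightarrow> 'a \<Rightarrow> bool) \<Rightarrow> 'a set set \<Rightarrow> 'a \<Rightarrow> 'a set \<Rightarrow> real" where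
  "wset V E Cl u V' = (\<Sum>v\<in>V'. wt V E Cl u v)"

end

theory Submission
  imports Defs
begin

text \<open>
  Minimise the potential \<open>\<Phi>(P) = d(P) + 12\<epsilon> m(P)\<close> over all clusterings \<open>P\<close> that do not split
  atoms, where \<open>d(P)\<close> counts the ordered disagreeing pairs (twice the cost) and \<open>m(P)\<close> those
  disagreeing pairs whose first vertex shares its cluster with a vertex outside its own atom.
  Every atom \<open>K\<close> with two or more vertices is a clique of the modified instance in which each
  vertex has at most \<open>5|K|/58\<close> +neighbours outside \<open>K\<close>, and a two-move exchange argument shows
  that no optimal clustering splits such a near-clique. Since \<open>m \<le> d\<close>, the minimiser therefore costs at most \<open>(1 + 12\<epsilon>) opt\<close>.
  If an atom \<open>K\<^sub>u \<subset> C\<close> violated \<open>w(u,C) > |C|/2 + \<epsilon> w\<^sub>u\<close>, write \<open>p\<close> and \<open>n\<close> for the numbers of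
  + and - pairs between \<open>K\<^sub>u\<close> and \<open>C - K\<^sub>u\<close>, and \<open>q\<close> for the +edges from \<open>K\<^sub>u\<close> leaving \<open>C\<close>.
  The violation reads \<open>k\<^sup>2 + p - n \<le> 2\<epsilon>(k\<^sup>2 + p + q)\<close> with \<open>k = |K\<^sub>u|\<close>, whereas isolating \<open>K\<^sub>u\<close>
  changes \<open>d\<close> by \<open>2(p - n)\<close> and \<open>m\<close> by at most \<open>p - 2n - q\<close>; for \<open>\<epsilon> \<le> 1/6\<close> this lowers \<open>\<Phi>\<close>,
  contradicting minimality.
\<close>

lemma same_cluster_sym: "same_cluster P u v \<longleftrightarrow> same_cluster P v u"
  unfolding same_cluster_def by blast

lemma same_cluster_iff_mem:
  assumes "partition_on V P" "D \<in> P" "u \<in> D"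
  shows "same_cluster P u v \<longleftrightarrow> v \<in> D"
  using assms disjointD[OF partition_onD2[OF assms(1)]] unfolding same_cluster_def by blast

lemma same_cluster_refl: "partition_on V P \<Longrightarrow> u \<in> V \<Longrightarrow> same_cluster P u u"
  unfolding same_cluster_def by (auto dest: partition_onD1)

definition isolate :: "'a set set \<Rightarrow> 'a set \<Rightarrow> 'a set set" where
  "isolate P S = insert S {D - S | D. D \<in> P \<and> D - S \<noteq> {}}"

lemma partition_on_isolate:
  assumes "partition_on V P" "S \<subseteq> V" "S \<noteq> {}"
  shows "partition_on V (isolate P S)"
proof (rule partition_onI)
  show "\<Union> (isolate P S) = V"
    using assms partition_onD1[OF assms(1)] unfolding isolate_def by auto
  show "{} \<notin> isolate P S"
    using assms unfolding isolate_def by auto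
  show "disjnt p q" if "p \<in> isolate P S" "q \<in> isolate P S" "p \<noteq> q" for p q
    using that disjointD[OF partition_onD2[OF assms(1)]] unfolding isolate_def disjnt_def by auto
qed

lemma same_cluster_isolate:
  "same_cluster (isolate P S) u v \<longleftrightarrow> u \<in> S \<and> v \<in> S \<or> u \<notin> S \<and> v \<notin> S \<and> same_cluster P u v"
  unfolding same_cluster_def isolate_def by auto

lemma partition_on_split_off:
  assumes "partition_on V P" "M \<subseteq> V"
  shows "partition_on V ({C - M | C. C \<in> P \<and> C - M \<noteq> {}} \<union> {{u} | u. u \<in> M})"
proof (rule partition_onI)
  show "\<Union> ({C - M | C. C \<in> P \<and> C - M \<noteq> {}} \<union> {{u} | u. u \<in> M}) = V"
  proof (intro equalityI subsetI)
    fix x assume "x \<in> V"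
    then obtain C where "C \<in> P" "x \<in> C"
      using partition_onD1[OF assms(1)] by auto
    then show "x \<in> \<Union> ({C - M | C. C \<in> P \<and> C - M \<noteq> {}} \<union> {{u} | u. u \<in> M})"
      by (cases "x \<in> M") blast+
  qed (use assms partition_onD1[OF assms(1)] in auto)
  show "disjnt p q"
    if "p \<in> {C - M | C. C \<in> P \<and> C - M \<noteq> {}} \<union> {{u} | u. u \<in> M}"
      and "q \<in> {C - M | C. C \<in> P \<and> C - M \<noteq> {}} \<union> {{u} | u. u \<in> M}" and "p \<noteq> q" for p q
    using that disjointD[OF partition_onD2[OF assms(1)]] unfolding disjnt_def by auto
qed auto

lemma the_block_eq:
  assumes "partition_on V P" "K \<in> P" "u \<in> K"
  shows "(THE K. K \<in> P \<and> u \<in> K) = K"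
  using assms disjointD[OF partition_onD2[OF assms(1)]] by (intro the_equality) auto

lemma the_block_mem:
  assumes "partition_on V P" "u \<in> V"
  shows "(THE K. K \<in> P \<and> u \<in> K) \<in> P" "u \<in> (THE K. K \<in> P \<and> u \<in> K)"
proof -
  obtain K where "K \<in> P" "u \<in> K"
    using assms partition_onD1[OF assms(1)] by auto
  then show "(THE K. K \<in> P \<and> u \<in> K) \<in> P" "u \<in> (THE K. K \<in> P \<and> u \<in> K)"
    using the_block_eq[OF assms(1)] by simp_all
qed

lemma swap_mem_swap_image: "(a, b) \<in> prod.swap ` X \<longleftrightarrow> (b, a) \<in> X"
  by force

lemma card_filter_not_add:
  "finite A \<Longrightarrow> card {x \<in> A. \<not> P x} + card {x \<in> A. P x} = card A"
  by (subst card_Un_disjoint[symmetric]) (auto intro: arg_cong[where f = card])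

lemma card_pairs_eq_sum:
  assumes "finite A" "finite B"
  shows "card {(x, y) \<in> A \<times> B. g x y} = (\<Sum>y\<in>B. card {x \<in> A. g x y})"
proof -
  have "{(x, y) \<in> A \<times> B. g x y} = prod.swap ` (SIGMA y:B. {x \<in> A. g x y})"
    by (auto simp: swap_mem_swap_image)
  then show ?thesis
    using assms by (simp add: card_image)
qed

lemma sum_block_averages:
  fixes f :: "'a \<Rightarrow> real"
  assumes "finite S" and mem: "\<And>v. v \<in> S \<Longrightarrow> v \<in> B v" and sub: "\<And>v. v \<in> S \<Longrightarrow> B v \<subseteq> S"
    and eq: "\<And>v y. v \<in> S \<Longrightarrow> y \<in> B v \<Longrightarrow> B y = B v"
  shows "(\<Sum>v\<in>S. (\<Sum>y\<in>B v. f y) / card (B v)) = (\<Sum>y\<in>S. f y)"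
proof -
  have "(\<Sum>y\<in>B v. f y) / card (B v) = (\<Sum>y\<in>{y \<in> S. y \<in> B v}. f y / card (B y))" if "v \<in> S" for v
  proof -
    have "{y \<in> S. y \<in> B v} = B v"
      using sub[OF that] by blast
    then show ?thesis
      unfolding sum_divide_distrib by (simp add: eq[OF that])
  qed
  then have "(\<Sum>v\<in>S. (\<Sum>y\<in>B v. f y) / card (B v))
      = (\<Sum>v\<in>S. \<Sum>y\<in>{y \<in> S. y \<in> B v}. f y / card (B y))"
    by (rule sum.cong[OF refl])
  also have "\<dots> = (\<Sum>y\<in>S. \<Sum>v\<in>{v \<in> S. y \<in> B v}. f y / card (B y))"
    by (rule sum.swap_restrict[OF \<open>finite S\<close> \<open>finite S\<close>])
  also have "\<dots> = (\<Sum>y\<in>S. f y)"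
  proof (rule sum.cong[OF refl])
    fix y assume "y \<in> S"
    then have "{v \<in> S. y \<in> B v} = B y"
      using mem sub eq by blast
    moreover have "card (B y) > 0"
      using mem sub \<open>y \<in> S\<close> \<open>finite S\<close> by (auto simp: card_gt_0_iff intro: finite_subset)
    ultimately show "(\<Sum>v\<in>{v \<in> S. y \<in> B v}. f y / card (B y)) = f y"
      by simp
  qed
  finally show ?thesis .
qed

lemma card_Un_swap_image:
  assumes "finite A" "finite B" "A \<subseteq> S \<times> T" "B \<subseteq> S \<times> U" "S \<inter> T = {}" "T \<inter> U = {}"
  shows "card (A \<union> prod.swap ` A \<union> B) = 2 * card A + card B"
proof -
  have "A \<inter> prod.swap ` A = {}"
    using assms(3,5) by (fastforce simp: disjoint_iff subset_iff)
  moreover have "A \<inter> B = {}"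
    using assms(3,4,6) by (fastforce simp: disjoint_iff subset_iff)
  moreover have "prod.swap ` A \<inter> B = {}"
    using assms(3,4,5) by (fastforce simp: disjoint_iff subset_iff)
  ultimately show ?thesis
    using assms(1,2) by (simp add: card_Un_disjoint card_image Int_Un_distrib2)
qed

lemma card_Sigma_lower_bound:
  assumes "finite A" "\<And>a. a \<in> A \<Longrightarrow> finite (B a)" "\<And>a. a \<in> A \<Longrightarrow> c \<le> real (card (B a))"
  shows "real (card A) * c \<le> real (card (Sigma A B))"
proof -
  have "real (card A) * c = (\<Sum>a\<in>A. c)"
    by simp
  also have "\<dots> \<le> (\<Sum>a\<in>A. real (card (B a)))"
    using assms(3) by (rule sum_mono)
  finally show ?thesis
    using assms(1,2) by (simp add: card_SigmaI)
qed

lemma card_Sigma_upper_bound: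
  assumes "finite A" "\<And>a. a \<in> A \<Longrightarrow> finite (B a)" "\<And>a. a \<in> A \<Longrightarrow> real (card (B a)) \<le> c"
  shows "real (card (Sigma A B)) \<le> real (card A) * c"
proof -
  have "real (card (Sigma A B)) = (\<Sum>a\<in>A. real (card (B a)))"
    using assms(1,2) by (simp add: card_SigmaI)
  also have "\<dots> \<le> (\<Sum>a\<in>A. c)"
    using assms(3) by (rule sum_mono)
  finally show ?thesis
    by simp
qed

section \<open>Disagreements\<close>

definition disagreements :: "'a set \<Rightarrow> ('a \<Rightarrow> 'a \<Rightarrow> bool) \<Rightarrow> 'a set set \<Rightarrow> ('a \<times> 'a) set" where
  "disagreements V F P = {(u, v) \<in> V \<times> V. u \<noteq> v \<and> F u v \<noteq> same_cluster P u v}"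

lemma finite_disagreements: "finite V \<Longrightarrow> finite (disagreements V F P)"
  unfolding disagreements_def by (rule finite_subset[of _ "V \<times> V"]) auto

lemma card_disagreements:
  assumes "finite V" and sym: "\<And>u v. F u v \<longleftrightarrow> F v u"
  shows "card (disagreements V F P) = 2 * cc_cost V F P"
proof -
  let ?D = "disagreements V F P" and ?edge = "\<lambda>(u, v). {u, v}"
  have fiber: "{z \<in> ?D. ?edge z = ?edge d} = {d, prod.swap d}" if "d \<in> ?D" for d
    using that sym same_cluster_sym[of P] unfolding disagreements_def
    by (cases d) (auto simp: doubleton_eq_iff)
  have "card ?D = (\<Sum>e\<in>?edge ` ?D. card {z \<in> ?D. ?edge z = e})"
    using sum.image_gen[OF finite_disagreements[OF assms(1), of F P], where h = "\<lambda>_. 1::nat" and g = ?edge] by simp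
  also have "\<dots> = (\<Sum>e\<in>?edge ` ?D. 2)"
    using fiber unfolding disagreements_def by (intro sum.cong) auto
  also have "?edge ` ?D = {{u, v} | u v. u \<in> V \<and> v \<in> V \<and> u \<noteq> v \<and>
      (F u v \<and> \<not> same_cluster P u v \<or> \<not> F u v \<and> same_cluster P u v)}"
    unfolding disagreements_def by auto
  finally show ?thesis
    unfolding cc_cost_def by simp
qed

lemma cc_opt_le:
  assumes "finite V" "partition_on V P"
  shows "cc_opt V F \<le> cc_cost V F P"
proof -
  have "finite {cc_cost V F P | P. partition_on V P}"
    using finitely_many_partition_on[OF assms(1)] by simp
  then show ?thesis
    unfolding cc_opt_def using assms(2) by (auto intro: Min_le)
qed

lemma cc_opt_attained:
  assumes "finite V"
  shows "\<exists>P. partition_on V P \<and> cc_cost V F P = cc_opt V F"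
proof -
  have "finite {cc_cost V F P | P. partition_on V P}"
    using finitely_many_partition_on[OF assms(1)] by simp
  moreover have "{cc_cost V F P | P. partition_on V P} \<noteq> {}"
    using partition_on_singletons[of V] by blast
  ultimately show ?thesis
    unfolding cc_opt_def using Min_in by fastforce
qed

text \<open>
  Isolating \<open>S\<close> flips exactly the pairs that it separates from their cluster and the pairs of \<open>S\<close>
  that were apart; each of them switches between agreement and disagreement.
\<close>

lemma card_disagreements_isolate:
  assumes "finite V" and sym: "\<And>u v. F u v \<longleftrightarrow> F v u" and P: "partition_on V P" and "S \<subseteq> V"
  defines "cut_pairs \<equiv> \<lambda>b. {(x, y) \<in> S \<times> (V - S). same_cluster P x y \<and> F x y = b}"
    and "join_pairs \<equiv> \<lambda>b. {(x, y) \<in> S \<times> S. \<not> same_cluster P x y \<and> F x y = b}"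
  shows "card (disagreements V F (isolate P S)) + 2 * card (cut_pairs False) + card (join_pairs True)
       = card (disagreements V F P) + 2 * card (cut_pairs True) + card (join_pairs False)"
proof -
  let ?DP = "disagreements V F P" and ?DQ = "disagreements V F (isolate P S)"
  define changed where "changed =
    {(x, y) \<in> V \<times> V. x \<noteq> y \<and> same_cluster (isolate P S) x y \<noteq> same_cluster P x y}"
  have fin: "finite ?DP" "finite changed" "finite (cut_pairs b)" "finite (join_pairs b)" for b
    using \<open>finite V\<close> \<open>S \<subseteq> V\<close> finite_disagreements unfolding changed_def cut_pairs_def join_pairs_def
    by (auto intro: finite_subset[of _ "V \<times> V"])
  have refl: "same_cluster P x x" if "x \<in> S" for x
    using same_cluster_refl[OF P] that \<open>S \<subseteq> V\<close> by auto
  have DQ: "?DQ = (?DP - changed) \<union> (changed - ?DP)"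
    unfolding disagreements_def changed_def by auto
  have lost: "?DP \<inter> changed = cut_pairs False \<union> prod.swap ` cut_pairs False \<union> join_pairs True"
    using \<open>S \<subseteq> V\<close> sym same_cluster_sym[of P] refl
    unfolding disagreements_def changed_def cut_pairs_def join_pairs_def same_cluster_isolate
    by (auto simp: swap_mem_swap_image)
  have gained: "changed - ?DP = cut_pairs True \<union> prod.swap ` cut_pairs True \<union> join_pairs False"
    using \<open>S \<subseteq> V\<close> sym same_cluster_sym[of P] refl
    unfolding disagreements_def changed_def cut_pairs_def join_pairs_def same_cluster_isolate
    by (auto simp: swap_mem_swap_image)
  have sub: "cut_pairs b \<subseteq> S \<times> (V - S)" "join_pairs b \<subseteq> S \<times> S" for b
    unfolding cut_pairs_def join_pairs_def by auto
  have "card (?DP \<inter> changed) = 2 * card (cut_pairs False) + card (join_pairs True)"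
    "card (changed - ?DP) = 2 * card (cut_pairs True) + card (join_pairs False)"
    unfolding lost gained by (rule card_Un_swap_image[OF fin(3,4) sub]; auto)+
  moreover have "card ?DQ = card (?DP - changed) + card (changed - ?DP)"
    unfolding DQ using fin by (intro card_Un_disjoint) auto
  moreover have "card ?DP = card (?DP - changed) + card (?DP \<inter> changed)"
    using card_Int_Diff[OF fin(1), of changed] by simp
  ultimately show ?thesis
    by linarith
qed

section \<open>Optimal clusterings do not split near-cliques\<close>

text \<open>
  The two competitors of a clustering that splits a near-clique \<open>K\<close>: isolating \<open>K\<close>, and
  merging \<open>K\<close> into the cluster \<open>D\<close> holding the largest part of it.
\<close>

lemma isolate_near_clique_cost:
  assumes "finite V" and sym: "\<And>u v. F u v \<longleftrightarrow> F v u" and P: "partition_on V P" and "K \<subseteq> V"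
    and clique: "\<And>x y. x \<in> K \<Longrightarrow> y \<in> K \<Longrightarrow> x \<noteq> y \<Longrightarrow> F x y"
    and out: "\<And>x. x \<in> K \<Longrightarrow> real (card {y \<in> V - K. F x y}) \<le> d"
    and D: "D \<in> P" and D_max: "\<And>D'. D' \<in> P \<Longrightarrow> card (D' \<inter> K) \<le> card (D \<inter> K)"
  defines "k \<equiv> real (card K)" and "a \<equiv> real (card (D \<inter> K))" and "b \<equiv> real (card (D - K))"
  shows "real (card (disagreements V F (isolate P K))) + k * (k - a) + 2 * a * (b - d)
     \<le> real (card (disagreements V F P)) + 2 * k * d"
proof -
  define cut_pairs where "cut_pairs = (\<lambda>b. {(x, y) \<in> K \<times> (V - K). same_cluster P x y \<and> F x y = b})"
  define join_pairs where "join_pairs = (\<lambda>b. {(x, y) \<in> K \<times> K. \<not> same_cluster P x y \<and> F x y = b})"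
  have fin: "finite K" "finite D"
    using \<open>finite V\<close> \<open>K \<subseteq> V\<close> D P by (auto intro: finite_subset dest: partition_onD1)
  have fin_cut: "finite (cut_pairs b)" for b
    unfolding cut_pairs_def using fin \<open>finite V\<close> by (auto intro: finite_subset[of _ "K \<times> V"])
  have refl: "same_cluster P x x" if "x \<in> K" for x
    using same_cluster_refl[OF P] that \<open>K \<subseteq> V\<close> by auto
  have "card (disagreements V F (isolate P K)) + 2 * card (cut_pairs False) + card (join_pairs True)
      = card (disagreements V F P) + 2 * card (cut_pairs True) + card (join_pairs False)"
    unfolding cut_pairs_def join_pairs_def
    by (rule card_disagreements_isolate[OF \<open>finite V\<close> _ P \<open>K \<subseteq> V\<close>]) (rule sym)
  moreover have "join_pairs False = {}"
    unfolding join_pairs_def using clique refl by auto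
  ultimately have identity: "card (disagreements V F (isolate P K)) + 2 * card (cut_pairs False)
      + card (join_pairs True) = card (disagreements V F P) + 2 * card (cut_pairs True)"
    by simp
  have "real (card (cut_pairs True)) \<le> real (card (Sigma K (\<lambda>x. {y \<in> V - K. F x y})))"
    unfolding cut_pairs_def using \<open>finite V\<close> fin by (intro of_nat_mono card_mono) auto
  also have "\<dots> \<le> k * d"
    unfolding k_def using fin \<open>finite V\<close> out by (intro card_Sigma_upper_bound) auto
  finally have plus_cut: "real (card (cut_pairs True)) \<le> k * d" .
  have "a * (b - d) \<le> real (card (Sigma (D \<inter> K) (\<lambda>x. {y \<in> D - K. \<not> F x y})))"
  proof -
    have "b - d \<le> real (card {y \<in> D - K. \<not> F x y})" if "x \<in> K" for x
    proof -
      have "card {y \<in> D - K. F x y} \<le> card {y \<in> V - K. F x y}"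
        using D P \<open>finite V\<close> by (intro card_mono) (auto dest: partition_onD1)
      moreover have "card {y \<in> D - K. \<not> F x y} + card {y \<in> D - K. F x y} = card (D - K)"
        by (rule card_filter_not_add) (use fin in auto)
      ultimately show ?thesis
        using out[OF that] unfolding b_def by linarith
    qed
    then show ?thesis
      unfolding a_def using fin by (intro card_Sigma_lower_bound) auto
  qed
  also have "\<dots> \<le> real (card (cut_pairs False))"
    using D P by (intro of_nat_mono card_mono[OF fin_cut])
      (auto simp: cut_pairs_def same_cluster_def dest: partition_onD1)
  finally have minus_cut: "a * (b - d) \<le> real (card (cut_pairs False))" .
  have "k * (k - a) \<le> real (card (Sigma K (\<lambda>x. {y \<in> K. \<not> same_cluster P x y})))"
  proof -
    have "k - a \<le> real (card {y \<in> K. \<not> same_cluster P x y})" if "x \<in> K" for x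
    proof -
      obtain Dx where Dx: "Dx \<in> P" "x \<in> Dx"
        using P \<open>K \<subseteq> V\<close> \<open>x \<in> K\<close> by (auto dest: partition_onD1)
      have "{y \<in> K. same_cluster P x y} = Dx \<inter> K"
        using same_cluster_iff_mem[OF P Dx] by auto
      then have "card {y \<in> K. same_cluster P x y} \<le> card (D \<inter> K)"
        using D_max[OF Dx(1)] by simp
      moreover have "card {y \<in> K. \<not> same_cluster P x y} + card {y \<in> K. same_cluster P x y} = card K"
        by (rule card_filter_not_add) (use fin in auto)
      ultimately show ?thesis
        unfolding k_def a_def by linarith
    qed
    then show ?thesis
      unfolding k_def using fin by (intro card_Sigma_lower_bound) auto
  qed
  also have "\<dots> = real (card (join_pairs True))"
    unfolding join_pairs_def using clique refl by (intro arg_cong[where f = "\<lambda>X. real (card X)"]) auto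
  finally have plus_join: "k * (k - a) \<le> real (card (join_pairs True))" .
  from arg_cong[OF identity, of real] plus_cut minus_cut plus_join show ?thesis
    by simp
qed

lemma isolate_union_near_clique_cost:
  assumes "finite V" and sym: "\<And>u v. F u v \<longleftrightarrow> F v u" and P: "partition_on V P" and "K \<subseteq> V"
    and clique: "\<And>x y. x \<in> K \<Longrightarrow> y \<in> K \<Longrightarrow> x \<noteq> y \<Longrightarrow> F x y"
    and out: "\<And>x. x \<in> K \<Longrightarrow> real (card {y \<in> V - K. F x y}) \<le> d"
    and D: "D \<in> P"
  defines "r \<equiv> real (card (K - D))" and "a \<equiv> real (card (D \<inter> K))" and "b \<equiv> real (card (D - K))"
  shows "real (card (disagreements V F (isolate P (D \<union> K)))) + 2 * r * a
     \<le> real (card (disagreements V F P)) + 2 * r * (b + d)"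
proof -
  let ?S = "D \<union> K"
  define cut_pairs where "cut_pairs = (\<lambda>b. {(x, y) \<in> ?S \<times> (V - ?S). same_cluster P x y \<and> F x y = b})"
  define join_pairs where "join_pairs = (\<lambda>b. {(x, y) \<in> ?S \<times> ?S. \<not> same_cluster P x y \<and> F x y = b})"
  have "D \<subseteq> V"
    using D P by (auto dest: partition_onD1)
  then have fin: "finite K" "finite D" "finite ?S"
    using \<open>finite V\<close> \<open>K \<subseteq> V\<close> by (auto intro: finite_subset)
  have fin_pairs: "finite (cut_pairs b)" "finite (join_pairs b)" for b
    unfolding cut_pairs_def join_pairs_def using fin \<open>finite V\<close>
    by (auto intro: finite_subset[of _ "?S \<times> V"] finite_subset[of _ "?S \<times> ?S"])
  have sameD: "same_cluster P x y \<longleftrightarrow> y \<in> D" "same_cluster P y x \<longleftrightarrow> y \<in> D" if "x \<in> D" for x y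
    using same_cluster_iff_mem[OF P D that] same_cluster_sym[of P] by auto
  have refl: "same_cluster P x x" if "x \<in> ?S" for x
    using same_cluster_refl[OF P] that \<open>D \<subseteq> V\<close> \<open>K \<subseteq> V\<close> by auto
  have identity: "card (disagreements V F (isolate P ?S)) + 2 * card (cut_pairs False) + card (join_pairs True)
      = card (disagreements V F P) + 2 * card (cut_pairs True) + card (join_pairs False)"
    unfolding cut_pairs_def join_pairs_def
    by (rule card_disagreements_isolate[OF \<open>finite V\<close> _ P]) (use sym \<open>D \<subseteq> V\<close> \<open>K \<subseteq> V\<close> in auto)
  have "2 * r * a = real (card ((K - D) \<times> (D \<inter> K) \<union> prod.swap ` ((K - D) \<times> (D \<inter> K)) \<union> {}))"
    unfolding r_def a_def using fin
    by (subst card_Un_swap_image[where S = "K - D" and T = "D \<inter> K" and U = "{}"]) (auto simp: card_cartesian_product)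
  also have "\<dots> \<le> real (card (join_pairs True))"
    using sameD by (intro of_nat_mono card_mono[OF fin_pairs(2)])
      (auto simp: join_pairs_def intro!: clique)
  finally have plus_join: "2 * r * a \<le> real (card (join_pairs True))" .
  have "real (card (cut_pairs True)) \<le> real (card (Sigma (K - D) (\<lambda>x. {y \<in> V - K. F x y})))"
    using fin \<open>finite V\<close> sameD
    by (intro of_nat_mono card_mono) (auto simp: cut_pairs_def)
  also have "\<dots> \<le> r * d"
    unfolding r_def using fin \<open>finite V\<close> out by (intro card_Sigma_upper_bound) auto
  finally have plus_cut: "real (card (cut_pairs True)) \<le> r * d" .
  have "join_pairs False \<subseteq> (K - D) \<times> (D - K) \<union> prod.swap ` ((K - D) \<times> (D - K)) \<union> {}"
  proof
    fix z assume "z \<in> join_pairs False"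
    then obtain x y where z: "z = (x, y)"
      and xy: "x \<in> ?S" "y \<in> ?S" "\<not> same_cluster P x y" "\<not> F x y"
      by (auto simp: join_pairs_def)
    then have "\<not> (x \<in> K \<and> y \<in> K)"
      using clique refl by metis
    with xy sameD show "z \<in> (K - D) \<times> (D - K) \<union> prod.swap ` ((K - D) \<times> (D - K)) \<union> {}"
      unfolding z by (auto simp: swap_mem_swap_image)
  qed
  then have "real (card (join_pairs False))
      \<le> real (card ((K - D) \<times> (D - K) \<union> prod.swap ` ((K - D) \<times> (D - K)) \<union> {}))"
    using fin by (intro of_nat_mono card_mono) auto
  also have "\<dots> = 2 * r * b"
    unfolding r_def b_def using fin
    by (subst card_Un_swap_image[where S = "K - D" and T = "D - K" and U = "{}"]) (auto simp: card_cartesian_product)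
  finally have minus_join: "real (card (join_pairs False)) \<le> 2 * r * b" .
  from arg_cong[OF identity, of real] plus_join plus_cut minus_join show ?thesis
    by (simp add: algebra_simps)
qed

theorem optimal_clustering_keeps_near_clique:
  assumes "finite V" and sym: "\<And>u v. F u v \<longleftrightarrow> F v u"
    and P: "partition_on V P" and opt: "cc_cost V F P = cc_opt V F"
    and "K \<subseteq> V" "K \<noteq> {}"
    and clique: "\<And>x y. x \<in> K \<Longrightarrow> y \<in> K \<Longrightarrow> x \<noteq> y \<Longrightarrow> F x y"
    and out: "\<And>x. x \<in> K \<Longrightarrow> 58 * card {y \<in> V - K. F x y} \<le> 5 * card K"
  shows "\<exists>D\<in>P. K \<subseteq> D"
proof (rule ccontr)
  assume split: "\<not> (\<exists>D\<in>P. K \<subseteq> D)"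
  have le_opt: "card (disagreements V F P) \<le> card (disagreements V F Q)" if "partition_on V Q" for Q
    using cc_opt_le[OF \<open>finite V\<close> that, of F] opt card_disagreements[OF \<open>finite V\<close>, of F] sym
    by simp
  have "finite P" "P \<noteq> {}"
    using finite_elements[OF \<open>finite V\<close> P] P \<open>K \<subseteq> V\<close> \<open>K \<noteq> {}\<close> by (auto dest: partition_onD1)
  then obtain D where D: "D \<in> P" "card (D \<inter> K) = Max ((\<lambda>D. card (D \<inter> K)) ` P)"
    using Max_in[of "(\<lambda>D. card (D \<inter> K)) ` P"] by fastforce
  have D_max: "card (D' \<inter> K) \<le> card (D \<inter> K)" if "D' \<in> P" for D'
    using D(2) Max_ge \<open>finite P\<close> that by simp
  define k where "k = real (card K)"
  define a where "a = real (card (D \<inter> K))"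
  define b where "b = real (card (D - K))"
  define r where "r = real (card (K - D))"
  have "D \<subseteq> V"
    using D(1) P by (auto dest: partition_onD1)
  have "finite K"
    using \<open>finite V\<close> \<open>K \<subseteq> V\<close> finite_subset by blast
  then have "k > 0" "r > 0"
    unfolding k_def r_def using \<open>K \<noteq> {}\<close> split D(1) by (auto simp: card_gt_0_iff)
  have out_real: "real (card {y \<in> V - K. F x y}) \<le> 5 * k / 58" if "x \<in> K" for x
    using out[OF that] unfolding k_def by simp
  have isolate_K: "k * (k - a) + 2 * a * (b - 5 * k / 58) \<le> 2 * k * (5 * k / 58)"
    using isolate_near_clique_cost[OF \<open>finite V\<close> sym P \<open>K \<subseteq> V\<close> clique out_real D(1) D_max]
      le_opt[OF partition_on_isolate[OF P \<open>K \<subseteq> V\<close> \<open>K \<noteq> {}\<close>]]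
    unfolding k_def a_def b_def by linarith
  have "partition_on V (isolate P (D \<union> K))"
    using partition_on_isolate[OF P] \<open>D \<subseteq> V\<close> \<open>K \<subseteq> V\<close> \<open>K \<noteq> {}\<close> by simp
  then have "2 * r * a \<le> 2 * r * (b + 5 * k / 58)"
    using isolate_union_near_clique_cost[OF \<open>finite V\<close> sym P \<open>K \<subseteq> V\<close> clique out_real D(1)] le_opt
    unfolding r_def a_def b_def by (smt (verit) of_nat_le_iff)
  then have "a \<le> b + 5 * k / 58"
    using \<open>r > 0\<close> by simp
  then have "a * (a - 10 * k / 58) \<le> a * (b - 5 * k / 58)"
    unfolding a_def by (intro mult_left_mono) auto
  with isolate_K have "48 * k\<^sup>2 - 78 * k * a + 116 * a\<^sup>2 \<le> 0"
    by (simp add: algebra_simps power2_eq_square)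
  \<comment> \<open>This is where the bound \<open>5/58\<close> on the out-degree is needed: the form is positive definite.\<close>
  moreover have "48 * k\<^sup>2 - 78 * k * a + 116 * a\<^sup>2 = 39 * (k - a)\<^sup>2 + 9 * k\<^sup>2 + 77 * a\<^sup>2"
    by (simp add: algebra_simps power2_eq_square)
  ultimately show False
    using \<open>k > 0\<close> by (smt (verit) zero_le_power2 zero_less_power)
qed

section \<open>Atoms\<close>

locale atom_instance =
  fixes V :: "'a set" and E :: "'a \<Rightarrow> 'a \<Rightarrow> bool" and Cl :: "'a set set"
  assumes finite_V: "finite V" and sym_E: "\<And>u v. E u v \<longleftrightarrow> E v u" and partition_Cl: "partition_on V Cl"
begin

abbreviation "\<K> \<equiv> atoms V E Cl"
abbreviation "E' \<equiv> mod_E V E Cl"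
abbreviation "atom \<equiv> atom_of V E Cl"

lemma premarked_subset: "premarked V E Cl C \<subseteq> C"
  unfolding premarked_def by auto

lemma marked_subset: "marked V E Cl \<subseteq> V"
proof -
  have "marked V E Cl \<subseteq> \<Union> Cl"
    unfolding marked_def using premarked_subset by (auto split: if_splits)
  then show ?thesis
    using partition_onD1[OF partition_Cl] by simp
qed

lemma cluster_Int_marked:
  assumes "C \<in> Cl" "2 \<le> card C"
  shows "C \<inter> marked V E Cl = (if beta * card C / 3 \<le> card (premarked V E Cl C) then C
                                else premarked V E Cl C)"
proof -
  define marked_in where "marked_in = (\<lambda>C. if beta * card C / 3 \<le> card (premarked V E Cl C) then C
                                          else premarked V E Cl C)"
  have "marked_in C' \<subseteq> C'" for C'
    unfolding marked_in_def using premarked_subset by auto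
  moreover have "C \<inter> C' = {}" if "C' \<in> Cl" "C' \<noteq> C" for C'
    using disjointD[OF partition_onD2[OF partition_Cl]] assms(1) that by blast
  ultimately have "C \<inter> marked_in C' = (if C' = C then marked_in C else {})" if "C' \<in> Cl" for C'
    using that by auto
  moreover have "C \<inter> marked V E Cl = (\<Union>C' \<in> {C' \<in> Cl. 2 \<le> card C'}. C \<inter> marked_in C')"
    unfolding marked_def marked_in_def by auto
  ultimately show ?thesis
    using assms unfolding marked_in_def by auto
qed

lemma atoms_partition: "partition_on V \<K>"
  unfolding atoms_def by (rule partition_on_split_off[OF partition_Cl marked_subset])

lemma atom_in_atoms: "u \<in> V \<Longrightarrow> atom u \<in> \<K>"
  and mem_atom: "u \<in> V \<Longrightarrow> u \<in> atom u"
  unfolding atom_of_def using the_block_mem[OF atoms_partition] by auto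

lemma atom_eq: "K \<in> \<K> \<Longrightarrow> u \<in> K \<Longrightarrow> atom u = K"
  unfolding atom_of_def using the_block_eq[OF atoms_partition] .

lemma atom_subset: "K \<in> \<K> \<Longrightarrow> K \<subseteq> V"
  using partition_onD1[OF atoms_partition] by auto

lemma mod_E_sym: "E' u v \<longleftrightarrow> E' v u"
  unfolding mod_E_def using sym_E by blast

lemma mod_E_atom: "K \<in> \<K> \<Longrightarrow> x \<in> K \<Longrightarrow> y \<in> K \<Longrightarrow> E' x y"
  unfolding mod_E_def by blast

lemma mod_E_leaving_atom:
  assumes "K \<in> \<K>" "x \<in> K" "y \<notin> K" "E' x y"
  shows "E x y"
  using assms atom_eq unfolding mod_E_def by metis

lemma large_atom:
  assumes "K \<in> \<K>" "2 \<le> card K"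
  obtains C where "C \<in> Cl" "K = C - premarked V E Cl C" "30 * card (premarked V E Cl C) < card C"
    "\<And>x. x \<in> K \<Longrightarrow> 20 * card (sym_diff (plus_nbhd V E x) C) \<le> card C"
proof -
  have "K \<notin> {{u} | u. u \<in> marked V E Cl}"
    using assms(2) by auto
  then obtain C where C: "C \<in> Cl" "K = C - marked V E Cl" "K \<noteq> {}"
    using assms(1) unfolding atoms_def by blast
  have "finite C"
    using C(1) partition_Cl finite_V by (auto intro: finite_subset dest: partition_onD1)
  then have "2 \<le> card C"
    using assms(2) C(2) card_mono[of C K] by simp
  have K_eq: "K = C - C \<inter> marked V E Cl"
    using C(2) by blast
  have few: "\<not> beta * card C / 3 \<le> card (premarked V E Cl C)"
  proof
    assume "beta * card C / 3 \<le> card (premarked V E Cl C)"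
    then have "C \<inter> marked V E Cl = C"
      using cluster_Int_marked[OF C(1) \<open>2 \<le> card C\<close>] by simp
    then show False
      using K_eq C(3) by simp
  qed
  show ?thesis
  proof
    show "K = C - premarked V E Cl C"
      using K_eq few cluster_Int_marked[OF C(1) \<open>2 \<le> card C\<close>] by simp
    show "30 * card (premarked V E Cl C) < card C"
    proof -
      have "real (30 * card (premarked V E Cl C)) < real (card C)"
        using few unfolding beta_def by simp
      then show ?thesis
        by (simp only: of_nat_less_iff)
    qed
    show "20 * card (sym_diff (plus_nbhd V E x) C) \<le> card C" if "x \<in> K" for x
    proof -
      have "\<not> real (card (sym_diff (plus_nbhd V E x) C)) > beta / 2 * real (card C)"
        using that \<open>K = C - premarked V E Cl C\<close> unfolding premarked_def by auto
      then have "real (20 * card (sym_diff (plus_nbhd V E x) C)) \<le> real (card C)"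
        unfolding beta_def by simp
      then show ?thesis
        by (simp only: of_nat_le_iff)
    qed
  qed (fact C(1))
qed

text \<open>
  The +neighbours of \<open>x\<close> outside \<open>K\<close> lie in \<open>N\<^sup>+\<^sub>x \<triangle> C\<close> or among the premarked vertices of \<open>C\<close>,
  fewer than \<open>|C|/20 + |C|/30 = |C|/12\<close> in all, while \<open>|K| > 29|C|/30\<close>.
\<close>

lemma atom_out_degree:
  assumes K: "K \<in> \<K>" "2 \<le> card K" and "x \<in> K"
  shows "58 * card {y \<in> V - K. E' x y} \<le> 5 * card K"
proof -
  let ?D = "sym_diff (plus_nbhd V E x) C" and ?pm = "premarked V E Cl"
  obtain C where C: "C \<in> Cl" "K = C - ?pm C" "30 * card (?pm C) < card C"
    and nbhds: "\<And>x. x \<in> K \<Longrightarrow> 20 * card (sym_diff (plus_nbhd V E x) C) \<le> card C"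
    using large_atom[OF K] by blast
  have "finite C" "finite (plus_nbhd V E x)"
    using C(1) partition_Cl finite_V unfolding plus_nbhd_def
    by (auto intro: finite_subset dest: partition_onD1)
  then have fin: "finite (sym_diff (plus_nbhd V E x) C)" "finite (?pm C)"
    using premarked_subset finite_subset by blast+
  have "{y \<in> V - K. E' x y} \<subseteq> sym_diff (plus_nbhd V E x) C \<union> ?pm C"
    using mod_E_leaving_atom[OF K(1) \<open>x \<in> K\<close>] C(2) unfolding plus_nbhd_def by auto
  then have "card {y \<in> V - K. E' x y} \<le> card (sym_diff (plus_nbhd V E x) C) + card (?pm C)"
    using fin by (meson card_Un_le card_mono finite_UnI le_trans)
  moreover have "card K = card C - card (?pm C)"
    using C(2) card_Diff_subset[OF fin(2) premarked_subset] by simp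
  moreover have "card (?pm C) \<le> card C"
    using \<open>finite C\<close> premarked_subset by (simp add: card_mono)
  ultimately show ?thesis
    using C(3) nbhds[OF \<open>x \<in> K\<close>] by linarith
qed

lemma atom_eq_atom: "v \<in> V \<Longrightarrow> y \<in> atom v \<Longrightarrow> atom y = atom v"
  using atom_eq[OF atom_in_atoms] .

lemma finite_atom: "v \<in> V \<Longrightarrow> finite (atom v)"
  using atom_subset[OF atom_in_atoms] finite_V finite_subset by blast

lemma wset_eq_card:
  assumes "u \<in> V" "S \<subseteq> V" and closed: "\<And>v. v \<in> S \<Longrightarrow> atom v \<subseteq> S"
  shows "wset V E Cl u S = card {(x, y) \<in> atom u \<times> S. E' x y \<or> x = y} / card (atom u)"
proof -
  define f where "f y = real (card {x \<in> atom u. E' x y \<or> x = y}) / card (atom u)" for y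
  have "finite S"
    using assms(2) finite_V finite_subset by blast
  have "wt V E Cl u v = (\<Sum>y\<in>atom v. f y) / card (atom v)" if "v \<in> V" for v
    unfolding wt_def Let_def f_def card_pairs_eq_sum[OF finite_atom[OF \<open>u \<in> V\<close>] finite_atom[OF that]]
    by (simp add: sum_divide_distrib[symmetric] divide_divide_eq_left mult.commute)
  then have "wset V E Cl u S = (\<Sum>v\<in>S. (\<Sum>y\<in>atom v. f y) / card (atom v))"
    unfolding wset_def using assms(2) by (intro sum.cong) auto
  also have "\<dots> = (\<Sum>y\<in>S. f y)"
  proof (rule sum_block_averages[OF \<open>finite S\<close>])
    show "v \<in> atom v" if "v \<in> S" for v
      using mem_atom that assms(2) by blast
    show "atom y = atom v" if "v \<in> S" "y \<in> atom v" for v y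
      using atom_eq_atom that assms(2) by blast
  qed (fact closed)
  also have "\<dots> = real (\<Sum>y\<in>S. card {x \<in> atom u. E' x y \<or> x = y}) / card (atom u)"
    unfolding f_def by (simp add: sum_divide_distrib)
  also have "(\<Sum>y\<in>S. card {x \<in> atom u. E' x y \<or> x = y}) = card {(x, y) \<in> atom u \<times> S. E' x y \<or> x = y}"
    using card_pairs_eq_sum[OF finite_atom[OF \<open>u \<in> V\<close>] \<open>finite S\<close>] by simp
  finally show ?thesis .
qed

lemma optimal_clustering_respects_atoms:
  assumes "partition_on V P" "cc_cost V E' P = cc_opt V E'" "K \<in> \<K>"
  shows "\<exists>D\<in>P. K \<subseteq> D"
proof (cases "2 \<le> card K")
  case True
  show ?thesis
  proof (rule optimal_clustering_keeps_near_clique[OF finite_V mod_E_sym assms(1,2)])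
    show "K \<subseteq> V" "K \<noteq> {}"
      using atom_subset[OF assms(3)] partition_onD3[OF atoms_partition] assms(3) by auto
    show "E' x y" if "x \<in> K" "y \<in> K" for x y
      using mod_E_atom[OF assms(3) that] .
    show "58 * card {y \<in> V - K. E' x y} \<le> 5 * card K" if "x \<in> K" for x
      using atom_out_degree[OF assms(3) True that] .
  qed
next
  case False
  moreover have "K \<noteq> {}" "finite K"
    using partition_onD3[OF atoms_partition] assms(3) atom_subset[OF assms(3)] finite_V
    by (auto intro: finite_subset)
  ultimately have "card K = 1"
    using card_gt_0_iff[of K] by linarith
  then obtain x where "K = {x}"
    by (rule card_1_singletonE)
  then show ?thesis
    using atom_subset[OF assms(3)] partition_onD1[OF assms(1)] by auto
qed

section \<open>The potential\<close>

definition atom_respecting :: "'a set set set" where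
  "atom_respecting = {P. partition_on V P \<and> (\<forall>K\<in>\<K>. \<exists>C\<in>P. K \<subseteq> C)}"

lemma finite_atom_respecting: "finite atom_respecting"
  unfolding atom_respecting_def
  by (rule finite_subset[OF _ finitely_many_partition_on[OF finite_V]]) auto

lemma optimal_atom_respecting: "\<exists>P\<in>atom_respecting. cc_cost V E' P = cc_opt V E'"
  using cc_opt_attained[OF finite_V] optimal_clustering_respects_atoms
  unfolding atom_respecting_def by blast

lemma isolate_atom_respecting:
  assumes P: "P \<in> atom_respecting" and K: "K \<in> \<K>"
  shows "isolate P K \<in> atom_respecting"
proof -
  have "partition_on V P" "K \<noteq> {}"
    using P partition_onD3[OF atoms_partition] K unfolding atom_respecting_def by auto
  then have "partition_on V (isolate P K)"
    using partition_on_isolate atom_subset[OF K] by blast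
  moreover have "\<exists>D\<in>isolate P K. K' \<subseteq> D" if K': "K' \<in> \<K>" for K'
  proof (cases "K' = K")
    case False
    obtain D where "D \<in> P" "K' \<subseteq> D"
      using P K' unfolding atom_respecting_def by blast
    moreover have "K' \<inter> K = {}" "K' \<noteq> {}"
      using disjointD[OF partition_onD2[OF atoms_partition] K' K] False
        partition_onD3[OF atoms_partition] K' by auto
    ultimately have "D - K \<in> isolate P K" "K' \<subseteq> D - K"
      unfolding isolate_def by auto
    then show ?thesis
      by blast
  qed (simp add: isolate_def)
  ultimately show ?thesis
    unfolding atom_respecting_def by blast
qed

lemma atom_subset_cluster:
  assumes "P \<in> atom_respecting" "C \<in> P" "v \<in> C"
  shows "atom v \<subseteq> C"
proof -
  have P: "partition_on V P"
    using assms(1) unfolding atom_respecting_def by blast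
  then have "v \<in> V"
    using assms(2,3) partition_onD1 by blast
  then obtain D where "D \<in> P" "atom v \<subseteq> D"
    using assms(1) atom_in_atoms unfolding atom_respecting_def by blast
  moreover have "D = C"
  proof (rule ccontr)
    assume "D \<noteq> C"
    then have "D \<inter> C = {}"
      by (rule disjointD[OF partition_onD2[OF P] \<open>D \<in> P\<close> assms(2)])
    with \<open>atom v \<subseteq> D\<close> mem_atom[OF \<open>v \<in> V\<close>] assms(3) show False
      by blast
  qed
  ultimately show ?thesis
    by simp
qed

definition merged :: "'a set set \<Rightarrow> 'a \<Rightarrow> bool" where
  "merged P x \<longleftrightarrow> (\<exists>w\<in>V. same_cluster P x w \<and> w \<notin> atom x)"

definition merged_disagreements :: "'a set set \<Rightarrow> ('a \<times> 'a) set" where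
  "merged_disagreements P = {z \<in> disagreements V E' P. merged P (fst z)}"

definition potential :: "real \<Rightarrow> 'a set set \<Rightarrow> real" where
  "potential e P = real (card (disagreements V E' P)) + 12 * e * real (card (merged_disagreements P))"

end

lemma potential_drop_arith:
  fixes e k p n q :: real
  assumes "0 < e" "e \<le> 1/6" "0 < k" "0 \<le> p" "0 \<le> q"
    and violation: "k\<^sup>2 + p - n \<le> 2 * e * (k\<^sup>2 + p + q)"
  shows "2 * (p - n) + 12 * e * (p - 2 * n - q) < 0"
proof -
  have "0 < (1 - 2 * e) * k\<^sup>2"
    using assms(2,3) by simp
  then have "p - n < 2 * e * (p + q)"
    using violation by (simp add: algebra_simps)
  then have "(2 + 24 * e) * (p - n) < (2 + 24 * e) * (2 * e * (p + q))"
    using \<open>0 < e\<close> by (intro mult_strict_left_mono) auto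
  moreover have "2 * e * (p + q) * (24 * e - 4) \<le> 0"
    using assms(1,2,4,5) by (intro mult_nonneg_nonpos) auto
  ultimately show ?thesis
    by (simp add: algebra_simps)
qed

locale atom_isolation = atom_instance +
  fixes P :: "'a set set" and C :: "'a set" and u :: 'a
  assumes P_respecting: "P \<in> atom_respecting" and C_in_P: "C \<in> P" and u_in_V: "u \<in> V"
    and atom_psubset: "atom u \<subset> C"
begin

abbreviation "K \<equiv> atom u"

definition plus_pairs :: "('a \<times> 'a) set" where
  "plus_pairs = {(x, y) \<in> K \<times> (C - K). E' x y}"

definition minus_pairs :: "('a \<times> 'a) set" where
  "minus_pairs = {(x, y) \<in> K \<times> (C - K). \<not> E' x y}"

definition outer_pairs :: "('a \<times> 'a) set" where
  "outer_pairs = {(x, y) \<in> K \<times> (V - C). E' x y}"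

lemma P_partition: "partition_on V P"
  using P_respecting unfolding atom_respecting_def by blast

lemma C_subset: "C \<subseteq> V"
  using C_in_P partition_onD1[OF P_partition] by blast

lemma finite_C: "finite C"
  using C_subset finite_V finite_subset by blast

lemma finite_K: "finite K"
  using finite_atom[OF u_in_V] .

lemma K_subset: "K \<subseteq> C"
  using atom_psubset by blast

lemma same_cluster_C:
  assumes "x \<in> C"
  shows "same_cluster P x y \<longleftrightarrow> y \<in> C" "same_cluster P y x \<longleftrightarrow> y \<in> C"
  using same_cluster_iff_mem[OF P_partition C_in_P assms] same_cluster_sym[of P] by auto

lemma finite_pairs: "finite plus_pairs" "finite minus_pairs" "finite outer_pairs"
  unfolding plus_pairs_def minus_pairs_def outer_pairs_def using finite_K finite_V C_subset
  by (auto intro: finite_subset[of _ "K \<times> V"])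

lemma card_plus_minus_pairs: "card plus_pairs + card minus_pairs = card K * card (C - K)"
proof -
  have "plus_pairs \<union> minus_pairs = K \<times> (C - K)" "plus_pairs \<inter> minus_pairs = {}"
    unfolding plus_pairs_def minus_pairs_def by auto
  then show ?thesis
    using finite_pairs card_Un_disjoint[of plus_pairs minus_pairs] by (simp add: card_cartesian_product)
qed

lemma card_K_pos: "0 < card K"
  using finite_K mem_atom[OF u_in_V] by (auto simp: card_gt_0_iff)

lemma weight_cluster: "card K * wset V E Cl u C = (card K)\<^sup>2 + card plus_pairs"
proof -
  have "{(x, y) \<in> K \<times> C. E' x y \<or> x = y} = K \<times> K \<union> plus_pairs"
    using mod_E_atom[OF atom_in_atoms[OF u_in_V]] K_subset unfolding plus_pairs_def by auto
  moreover have "K \<times> K \<inter> plus_pairs = {}"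
    unfolding plus_pairs_def by auto
  ultimately have "card {(x, y) \<in> K \<times> C. E' x y \<or> x = y} = (card K)\<^sup>2 + card plus_pairs"
    using finite_K finite_pairs
    by (simp add: card_Un_disjoint card_cartesian_product power2_eq_square)
  then show ?thesis
    using wset_eq_card[OF u_in_V C_subset atom_subset_cluster[OF P_respecting C_in_P]] card_K_pos
    by simp
qed

lemma weight_total: "card K * wset V E Cl u V = (card K)\<^sup>2 + card plus_pairs + card outer_pairs"
proof -
  have "{(x, y) \<in> K \<times> V. E' x y \<or> x = y} = K \<times> K \<union> plus_pairs \<union> outer_pairs"
    using mod_E_atom[OF atom_in_atoms[OF u_in_V]] K_subset C_subset atom_subset[OF atom_in_atoms[OF u_in_V]]
    unfolding plus_pairs_def outer_pairs_def by auto
  moreover have "K \<times> K \<inter> plus_pairs = {}" "(K \<times> K \<union> plus_pairs) \<inter> outer_pairs = {}"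
    using K_subset unfolding plus_pairs_def outer_pairs_def by auto
  ultimately have "card {(x, y) \<in> K \<times> V. E' x y \<or> x = y}
      = (card K)\<^sup>2 + card plus_pairs + card outer_pairs"
    using finite_K finite_pairs
    by (simp add: card_Un_disjoint card_cartesian_product power2_eq_square)
  then show ?thesis
    using wset_eq_card[OF u_in_V subset_refl atom_subset[OF atom_in_atoms]] card_K_pos
    by simp
qed

lemma card_disagreements_isolate_atom:
  "card (disagreements V E' (isolate P K)) + 2 * card minus_pairs
     = card (disagreements V E' P) + 2 * card plus_pairs"
proof -
  have K_V: "K \<subseteq> V"
    using K_subset C_subset by blast
  have cut: "{(x, y) \<in> K \<times> (V - K). same_cluster P x y \<and> E' x y = b}
      = {(x, y) \<in> K \<times> (C - K). E' x y = b}" for b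
    using same_cluster_C K_subset C_subset by blast
  have join: "{(x, y) \<in> K \<times> K. \<not> same_cluster P x y \<and> E' x y = b} = {}" for b
    using same_cluster_C K_subset by blast
  show ?thesis
    using card_disagreements_isolate[where F = E', OF finite_V mod_E_sym P_partition K_V]
    unfolding cut join plus_pairs_def minus_pairs_def by simp
qed

lemma merged_in_cluster:
  assumes "x \<in> C"
  shows "merged P x"
proof (cases "x \<in> K")
  case True
  obtain w where "w \<in> C - K"
    using atom_psubset by blast
  then show ?thesis
    unfolding merged_def using same_cluster_C(1)[OF assms] C_subset atom_eq_atom[OF u_in_V True] by auto
next
  case False
  have "x \<in> V"
    using assms C_subset by blast
  then have "u \<notin> atom x"
    using False atom_eq_atom mem_atom by metis
  then show ?thesis
    unfolding merged_def using same_cluster_C(1)[OF assms] K_subset mem_atom u_in_V by blast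
qed

lemma merged_isolateD:
  assumes "merged (isolate P K) x"
  shows "x \<notin> K" "merged P x"
proof -
  obtain w where w: "w \<in> V" "same_cluster (isolate P K) x w" "w \<notin> atom x"
    using assms unfolding merged_def by blast
  show "x \<notin> K"
  proof
    assume "x \<in> K"
    then show False
      using w same_cluster_isolate atom_eq_atom[OF u_in_V] by metis
  qed
  then show "merged P x"
    using w unfolding merged_def same_cluster_isolate by blast
qed

lemma card_merged_disagreements_isolate_atom:
  "card (merged_disagreements (isolate P K)) + 2 * card minus_pairs + card outer_pairs
     \<le> card (merged_disagreements P) + card plus_pairs"
proof -
  let ?lost = "minus_pairs \<union> prod.swap ` minus_pairs \<union> outer_pairs"
  have fin: "finite (merged_disagreements Q)" for Q
    unfolding merged_disagreements_def using finite_disagreements[OF finite_V] by simp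
  have lost: "?lost \<subseteq> merged_disagreements P"
  proof -
    have inside: "(x, y) \<in> merged_disagreements P" if "x \<in> C" "y \<in> C" "x \<noteq> y" "\<not> E' x y" for x y
      using that C_subset merged_in_cluster same_cluster_C
      unfolding merged_disagreements_def disagreements_def by auto
    have outside: "(x, y) \<in> merged_disagreements P" if "x \<in> C" "y \<in> V - C" "E' x y" for x y
      using that C_subset merged_in_cluster same_cluster_C
      unfolding merged_disagreements_def disagreements_def by auto
    show ?thesis
      using K_subset mod_E_sym unfolding minus_pairs_def outer_pairs_def
      by (auto simp: swap_mem_swap_image intro: inside outside) (metis inside subsetD)
  qed
  have gained: "merged_disagreements (isolate P K) \<subseteq> (merged_disagreements P - ?lost) \<union> prod.swap ` plus_pairs"
  proof (clarify)
    fix x y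
    assume xy: "(x, y) \<in> merged_disagreements (isolate P K)" "(x, y) \<notin> prod.swap ` plus_pairs"
    then have "x \<notin> K" "merged P x"
      using merged_isolateD unfolding merged_disagreements_def by auto
    show "(x, y) \<in> merged_disagreements P - ?lost"
    proof (cases "x \<in> C \<and> y \<in> K")
      case True
      then have "E' x y"
        using xy(1) \<open>x \<notin> K\<close> unfolding merged_disagreements_def disagreements_def same_cluster_isolate
        by auto
      then show ?thesis
        using xy(2) True \<open>x \<notin> K\<close> mod_E_sym unfolding plus_pairs_def by (auto simp: swap_mem_swap_image)
    next
      case False
      then have "same_cluster (isolate P K) x y \<longleftrightarrow> same_cluster P x y"
        using \<open>x \<notin> K\<close> same_cluster_C(2) K_subset unfolding same_cluster_isolate by blast
      then show ?thesis
        using xy(1) False \<open>x \<notin> K\<close> \<open>merged P x\<close>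
        unfolding merged_disagreements_def disagreements_def plus_pairs_def minus_pairs_def outer_pairs_def
        by (auto simp: swap_mem_swap_image)
    qed
  qed
  have "card ?lost = 2 * card minus_pairs + card outer_pairs"
    using finite_pairs
    by (intro card_Un_swap_image[where S = K and T = "C - K" and U = "V - C"])
      (auto simp: minus_pairs_def outer_pairs_def)
  moreover have "card (merged_disagreements (isolate P K))
      \<le> card (merged_disagreements P - ?lost) + card (prod.swap ` plus_pairs)"
    using card_mono[OF _ gained] card_Un_le fin finite_pairs by (meson finite_Diff finite_UnI finite_imageI le_trans)
  moreover have "card (merged_disagreements P - ?lost) = card (merged_disagreements P) - card ?lost"
    using card_Diff_subset[OF finite_subset[OF lost fin] lost] .
  moreover have "card ?lost \<le> card (merged_disagreements P)"
    using card_mono[OF fin lost] .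
  ultimately show ?thesis
    by (simp add: card_image)
qed

lemma potential_isolate_atom_less:
  assumes "0 < e" "e \<le> 1/6"
    and violation: "wset V E Cl u C \<le> card C / 2 + e * wset V E Cl u V"
  shows "potential e (isolate P K) < potential e P"
proof -
  define k p n q where "k = real (card K)" and "p = real (card plus_pairs)"
    and "n = real (card minus_pairs)" and "q = real (card outer_pairs)"
  have "card C = card K + card (C - K)"
    using card_Diff_subset[OF finite_K K_subset] card_mono[OF finite_C K_subset] by simp
  then have "real (card C) = k + real (card (C - K))"
    unfolding k_def by simp
  moreover have "p + n = k * real (card (C - K))"
    using arg_cong[OF card_plus_minus_pairs, of real] unfolding k_def p_def n_def by simp
  ultimately have card_C: "k * card C = k\<^sup>2 + p + n"
    by (simp add: algebra_simps power2_eq_square)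
  have "k * wset V E Cl u C \<le> k * (card C / 2 + e * wset V E Cl u V)"
    using violation card_K_pos unfolding k_def by (intro mult_left_mono) auto
  also have "\<dots> = (k * card C) / 2 + e * (k * wset V E Cl u V)"
    by (simp add: algebra_simps)
  finally have "k\<^sup>2 + p \<le> (k\<^sup>2 + p + n) / 2 + e * (k\<^sup>2 + p + q)"
    using weight_cluster weight_total card_C unfolding k_def p_def q_def by simp
  then have "k\<^sup>2 + p - n \<le> 2 * e * (k\<^sup>2 + p + q)"
    by (simp add: field_simps)
  then have drop: "2 * (p - n) + 12 * e * (p - 2 * n - q) < 0"
    using card_K_pos unfolding k_def p_def q_def by (intro potential_drop_arith[OF assms(1,2)]) auto
  have "real (card (merged_disagreements (isolate P K))) \<le> real (card (merged_disagreements P)) + p - 2 * n - q"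
    using card_merged_disagreements_isolate_atom unfolding p_def n_def q_def by linarith
  then have "12 * e * real (card (merged_disagreements (isolate P K)))
      \<le> 12 * e * (real (card (merged_disagreements P)) + p - 2 * n - q)"
    using \<open>0 < e\<close> by (intro mult_left_mono) auto
  moreover have "real (card (disagreements V E' (isolate P K))) = real (card (disagreements V E' P)) + 2 * (p - n)"
    using arg_cong[OF card_disagreements_isolate_atom, of real] unfolding p_def n_def by simp
  ultimately show ?thesis
    using drop unfolding potential_def by (simp add: algebra_simps)
qed

end

lemma (in atom_instance) good_clustering_exists:
  assumes "0 < e" "e \<le> 1/6"
  shows "\<exists>C1\<in>atom_respecting. real (cc_cost V E' C1) \<le> (1 + 12 * e) * real (cc_opt V E') \<and>
    (\<forall>u\<in>V. \<forall>C\<in>C1. atom u \<subset> C \<longrightarrow> wset V E Cl u C > card C / 2 + e * wset V E Cl u V)"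
proof -
  have card_D: "card (disagreements V E' Q) = 2 * cc_cost V E' Q" for Q
    using card_disagreements[where F = E', OF finite_V mod_E_sym] .
  have merged_le: "card (merged_disagreements Q) \<le> card (disagreements V E' Q)" for Q
    unfolding merged_disagreements_def by (rule card_mono[OF finite_disagreements[OF finite_V]]) auto
  obtain P where P: "P \<in> atom_respecting"
    and P_min: "\<And>Q. Q \<in> atom_respecting \<Longrightarrow> potential e P \<le> potential e Q"
    using ex_is_arg_min_if_finite[OF finite_atom_respecting, of "potential e"] optimal_atom_respecting
    unfolding is_arg_min_def by (auto simp: not_less)
  obtain P_opt where P_opt: "P_opt \<in> atom_respecting" "cc_cost V E' P_opt = cc_opt V E'"
    using optimal_atom_respecting by blast
  have "2 * real (cc_cost V E' P) \<le> potential e P"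
    using card_D[of P] \<open>0 < e\<close> unfolding potential_def by simp
  also have "\<dots> \<le> potential e P_opt"
    using P_min[OF P_opt(1)] .
  also have "\<dots> \<le> (1 + 12 * e) * (2 * real (cc_opt V E'))"
    using merged_le[of P_opt] card_D[of P_opt] P_opt(2) \<open>0 < e\<close>
    unfolding potential_def by (simp add: algebra_simps)
  finally have cost: "real (cc_cost V E' P) \<le> (1 + 12 * e) * real (cc_opt V E')"
    by simp
  have "wset V E Cl u C > card C / 2 + e * wset V E Cl u V"
    if "u \<in> V" "C \<in> P" "atom u \<subset> C" for u C
  proof (rule ccontr)
    assume violation: "\<not> ?thesis"
    interpret atom_isolation V E Cl P C u
      using P that by unfold_locales
    have "potential e (isolate P (atom u)) < potential e P"
      using potential_isolate_atom_less assms violation by simp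
    then show False
      using P_min[OF isolate_atom_respecting[OF P atom_in_atoms[OF \<open>u \<in> V\<close>]]] by simp
  qed
  with P cost show ?thesis
    by blast
qed

theorem lemma9:
  "\<exists>c::real. c > 0 \<and> (\<exists>\<epsilon>0::real. \<epsilon>0 > 0 \<and>
    (\<forall>\<epsilon>::real. 0 < \<epsilon> \<and> \<epsilon> < \<epsilon>0 \<longrightarrow>
      (\<forall>(V :: nat set) (E :: nat \<Rightarrow> nat \<Rightarrow> bool) (Cl :: nat set set).
         finite V \<and> (\<forall>u v. E u v \<longleftrightarrow> E v u) \<and>
         partition_on V Cl \<and> cc_cost V E Cl \<le> 3 * cc_opt V E \<longrightarrow>
         (\<exists>C1. partition_on V C1 \<and>
            real (cc_cost V (mod_E V E Cl) C1) \<le> (1 + c * \<epsilon>) * real (cc_opt V (mod_E V E Cl)) \<and>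
            (\<forall>K \<in> atoms V E Cl. \<exists>C \<in> C1. K \<subseteq> C) \<and>
            (\<forall>u \<in> V. \<forall>C \<in> C1. atom_of V E Cl u \<subset> C \<longrightarrow>
               wset V E Cl u C > real (card C) / 2 + \<epsilon> * wset V E Cl u V)))))"
proof (rule exI[of _ "12::real"], intro conjI exI[of _ "1/6::real"] allI impI)
  fix \<epsilon> :: real and V :: "nat set" and E :: "nat \<Rightarrow> nat \<Rightarrow> bool" and Cl :: "nat set set"
  assume "0 < \<epsilon> \<and> \<epsilon> < 1/6"
  assume "finite V \<and> (\<forall>u v. E u v \<longleftrightarrow> E v u) \<and> partition_on V Cl \<and> cc_cost V E Cl \<le> 3 * cc_opt V E"
  then interpret atom_instance V E Cl
    by unfold_locales auto
  obtain C1 where "C1 \<in> atom_respecting"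
    and "real (cc_cost V (mod_E V E Cl) C1) \<le> (1 + 12 * \<epsilon>) * real (cc_opt V (mod_E V E Cl))"
    and "\<forall>u\<in>V. \<forall>C\<in>C1. atom_of V E Cl u \<subset> C \<longrightarrow>
           wset V E Cl u C > real (card C) / 2 + \<epsilon> * wset V E Cl u V"
    using good_clustering_exists[of \<epsilon>] \<open>0 < \<epsilon> \<and> \<epsilon> < 1/6\<close> by auto
  then show "\<exists>C1. partition_on V C1 \<and>
      real (cc_cost V (mod_E V E Cl) C1) \<le> (1 + 12 * \<epsilon>) * real (cc_opt V (mod_E V E Cl)) \<and>
      (\<forall>K \<in> atoms V E Cl. \<exists>C \<in> C1. K \<subseteq> C) \<and>
      (\<forall>u \<in> V. \<forall>C \<in> C1. atom_of V E Cl u \<subset> C \<longrightarrow>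
         wset V E Cl u C > real (card C) / 2 + \<epsilon> * wset V E Cl u V)"
    unfolding atom_respecting_def by blast
qed simp_all

end
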